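(* Let $\mathbf G_*=(\partial:G_1\to G_0)$ be a crossed module and let $\mathbf Z_*(\mathbf G_* )$ be the crossed module $\delta:G_1\to\mathbf Z_0(\mathbf G_* )$. Then: (i) for $(x,\xi)\in\mathbf Z_0(\mathbf G_* )$ and $y\in G_0$, $\xi(y)$ is a morphism $yx\to xy$ in $\mathsf{Cat}(\mathbf G_* )$; (ii) the family $\bar\xi=(\xi(y))_{y}$ is a natural isomorphism $(-)\cdot x\Rightarrow x\cdot(-)$; (iii) $(x,\bar\xi)$ is an object of the centre $\mathcal Z(\mathsf{Cat}(\mathbf G_* ))$; (iv) the map $(x,\xi)\mapsto (x,\bar\xi)$ is a bijection from $\mathbf Z_0(\mathbf G_* )$ onto the objects of $\mathcal Z(\mathsf{Cat}(\mathbf G_* ))$; (v) for $(x,\xi),(y,\eta)\in\mathbf Z_0(\mathbf G_* )$ and $a\in G_1$ with $y=\partial(a)x$, the morphism $a:x\to y$ of $\mathsf{Cat}(\mathbf G_* )$ is a morphism $(x,\bar\xi)\to(y,\bar\eta)$ in $\mathcal Z(\mathsf{Cat}(\mathbf G_* ))$ if and only if $(y,\eta)=\delta(a)\cdot(x,\xi)$; consequently the bijection of (iv), together with the identity on morphisms $a\mapsto a$, is an isomorphism of monoidal categories $\mathsf{Cat}(\mathbf Z_*(\mathbf G_* ))\to\mathcal Z(\mathsf{Cat}(\mathbf G_* ))$.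
   Context: A crossed module consists of groups $H_1,H_0$, a homomorphism $\partial:H_1\to H_0$ and a left action $(x,a)\mapsto{}^x a$ of $H_0$ on $H_1$ by automorphisms with $\partial({}^x a)=x\partial(a)x^{-1}$ and ${}^{\partial(b)}a=bab^{-1}$. For a crossed module $\mathbf H_*$, the strict monoidal groupoid $\mathsf{Cat}(\mathbf H_* )$ has objects the elements of $H_0$; a morphism $x\to y$ is an element $a\in H_1$ with $y=\partial(a)x$; composition of $a:x\to\partial(a)x$ and $b:\partial(a)x\to\partial(b)\partial(a)x$ is $ba$; the tensor product is $x\cdot y=xy$ on objects and $(a:x\to x')\cdot(b:y\to y')=(a\,{}^x b: xy\to x'y')$ on morphisms. For a monoidal category $(\mathcal C,\otimes)$ its centre $\mathcal Z(\mathcal C)$ has objects pairs $(x,\xi)$ with $\xi:(-)\otimes x\Rightarrow x\otimes(-)$ a natural isomorphism with components $\xi_y:y\otimes x\to x\otimes y$ such that $\xi_{y\otimes z}=(\xi_y\otimes 1_z)\circ(1_y\otimes\xi_z)$; morphisms $(x,\xi)\to(y,\eta)$ are $f:x\to y$ with $(f\otimes 1_z)\circ\xi_z=\eta_z\circ(1_z\otimes f)$ for all $z$; tensor $(x,\xi)\otimes(y,\eta)=(x\otimes y,\zeta)$ with $\zeta_z=(1_x\otimes\eta_z)\circ(\xi_z\otimes 1_y)$. Commutators $[x,t]=xtx^{-1}t^{-1}$. $\mathbf Z_0(\mathbf G_* )$ is the set of pairs $(x,\xi)$, $x\in G_0$, $\xi:G_0\to G_1$ with (Z1) $\partial\xi(t)=[x,t]$,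 (Z2) $\xi(\partial a)={}^xa\,a^{-1}$, (Z3) $\xi(st)=\xi(s)\,{}^s\xi(t)$; it is a group under $(x,\xi)(y,\eta)=(xy,t\mapsto{}^x\eta(t)\xi(t))$. $\delta:G_1\to\mathbf Z_0(\mathbf G_* )$ is $\delta(c)=(\partial c, t\mapsto c({}^tc)^{-1})$, and $\mathbf Z_0(\mathbf G_* )$ acts on $G_1$ by ${}^{(x,\xi)}a={}^xa$; this is a crossed module $\mathbf Z_*(\mathbf G_* )$. *)

theory Defs
  imports "HOL-Algebra.Group" "HOL-Library.FuncSet"
begin

definition crossed_module ::
  "('a,'c) monoid_scheme \<Rightarrow> ('b,'e) monoid_scheme \<Rightarrow> ('a \<Rightarrow> 'b) \<Rightarrow> ('b \<Rightarrow> 'a \<Rightarrow> 'a) \<Rightarrow> bool" where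
  "crossed_module H1 H0 d act \<longleftrightarrow>
     group H1 \<and> group H0 \<and> d \<in> hom H1 H0 \<and>
     (\<forall>x\<in>carrier H0. \<forall>a\<in>carrier H1. act x a \<in> carrier H1) \<and>
     (\<forall>x\<in>carrier H0. \<forall>a\<in>carrier H1. \<forall>b\<in>carrier H1.
        act x (a \<otimes>\<^bsub>H1\<^esub> b) = act x a \<otimes>\<^bsub>H1\<^esub> act x b) \<and>
     (\<forall>a\<in>carrier H1. act \<one>\<^bsub>H0\<^esub> a = a) \<and>
     (\<forall>x\<in>carrier H0. \<forall>y\<in>carrier H0. \<forall>a\<in>carrier H1.
        act (x \<otimes>\<^bsub>H0\<^esub> y) a = act x (act y a)) \<and>
     (\<forall>x\<in>carrier H0. \<forall>a\<in>carrier H1.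
        d (act x a) = x \<otimes>\<^bsub>H0\<^esub> d a \<otimes>\<^bsub>H0\<^esub> inv\<^bsub>H0\<^esub> x) \<and>
     (\<forall>a\<in>carrier H1. \<forall>b\<in>carrier H1.
        act (d b) a = b \<otimes>\<^bsub>H1\<^esub> a \<otimes>\<^bsub>H1\<^esub> inv\<^bsub>H1\<^esub> b)"

text \<open>Objects of type 'o, morphisms of type 'm.  hom x y is the set of morphisms x \<rightarrow> y,
  cmp g f is the composite g \<circ> f, idm x the identity, tob / tmor the tensor product on
  objects / morphisms, unt the unit object.\<close>

record ('o,'m) smcat =
  ob   :: "'o set"
  hom  :: "'o \<Rightarrow> 'o \<Rightarrow> 'm set"
  cmp  :: "'m \<Rightarrow> 'm \<Rightarrow> 'm"
  idm  :: "'o \<Rightarrow> 'm"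
  tob  :: "'o \<Rightarrow> 'o \<Rightarrow> 'o"
  tmor :: "'m \<Rightarrow> 'm \<Rightarrow> 'm"
  unt  :: "'o"

definition is_iso :: "('o,'m,'z) smcat_scheme \<Rightarrow> 'm \<Rightarrow> 'o \<Rightarrow> 'o \<Rightarrow> bool" where
  "is_iso C f x y \<longleftrightarrow> f \<in> hom C x y \<and>
     (\<exists>g\<in>hom C y x. cmp C g f = idm C x \<and> cmp C f g = idm C y)"

definition nat_iso_lr :: "('o,'m,'z) smcat_scheme \<Rightarrow> 'o \<Rightarrow> ('o \<Rightarrow> 'm) \<Rightarrow> bool" where
  "nat_iso_lr C x xi \<longleftrightarrow>
     (\<forall>y\<in>ob C. is_iso C (xi y) (tob C y x) (tob C x y)) \<and>
     (\<forall>y\<in>ob C. \<forall>y'\<in>ob C. \<forall>f\<in>hom C y y'.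
        cmp C (tmor C (idm C x) f) (xi y) = cmp C (xi y') (tmor C f (idm C x)))"

definition ctr_obj :: "('o,'m,'z) smcat_scheme \<Rightarrow> 'o \<times> ('o \<Rightarrow> 'm) \<Rightarrow> bool" where
  "ctr_obj C X \<longleftrightarrow> (case X of (x, xi) \<Rightarrow>
     x \<in> ob C \<and> xi \<in> extensional (ob C) \<and> nat_iso_lr C x xi \<and>
     (\<forall>y\<in>ob C. \<forall>z\<in>ob C.
        xi (tob C y z) = cmp C (tmor C (xi y) (idm C z)) (tmor C (idm C y) (xi z))))"

definition ctr_hom :: "('o,'m,'z) smcat_scheme \<Rightarrow> 'o \<times> ('o \<Rightarrow> 'm) \<Rightarrow> 'o \<times> ('o \<Rightarrow> 'm) \<Rightarrow> 'm set" where
  "ctr_hom C X Y = {f \<in> hom C (fst X) (fst Y).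
     \<forall>z\<in>ob C. cmp C (tmor C f (idm C z)) (snd X z) = cmp C (snd Y z) (tmor C (idm C z) f)}"

definition centre :: "('o,'m,'z) smcat_scheme \<Rightarrow> ('o \<times> ('o \<Rightarrow> 'm), 'm) smcat" where
  "centre C = \<lparr> ob = {X. ctr_obj C X},
     hom = ctr_hom C,
     cmp = cmp C,
     idm = (\<lambda>X. idm C (fst X)),
     tob = (\<lambda>X Y. (tob C (fst X) (fst Y),
              \<lambda>z\<in>ob C. cmp C (tmor C (idm C (fst X)) (snd Y z)) (tmor C (snd X z) (idm C (fst Y))))),
     tmor = tmor C,
     unt = (unt C, \<lambda>z\<in>ob C. idm C z) \<rparr>"

definition smcat_iso ::
  "('o,'m,'z) smcat_scheme \<Rightarrow> ('p,'n,'w) smcat_scheme \<Rightarrow> ('o \<Rightarrow> 'p) \<Rightarrow> ('m \<Rightarrow> 'n) \<Rightarrow> bool" where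
  "smcat_iso C D Fo Fm \<longleftrightarrow>
     bij_betw Fo (ob C) (ob D) \<and>
     (\<forall>x\<in>ob C. \<forall>y\<in>ob C. bij_betw Fm (hom C x y) (hom D (Fo x) (Fo y))) \<and>
     (\<forall>x\<in>ob C. Fm (idm C x) = idm D (Fo x)) \<and>
     (\<forall>x\<in>ob C. \<forall>y\<in>ob C. \<forall>z\<in>ob C. \<forall>f\<in>hom C x y. \<forall>g\<in>hom C y z.
        Fm (cmp C g f) = cmp D (Fm g) (Fm f)) \<and>
     (\<forall>x\<in>ob C. \<forall>y\<in>ob C. Fo (tob C x y) = tob D (Fo x) (Fo y)) \<and>
     Fo (unt C) = unt D \<and>
     (\<forall>x\<in>ob C. \<forall>x'\<in>ob C. \<forall>y\<in>ob C. \<forall>y'\<in>ob C. \<forall>f\<in>hom C x x'. \<forall>g\<in>hom C y y'.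
        Fm (tmor C f g) = tmor D (Fm f) (Fm g))"

text \<open>A morphism a : x \<rightarrow> d(a) x is represented as the triple (x, a, d(a) x).\<close>
definition CatXM ::
  "('a,'c) monoid_scheme \<Rightarrow> ('b,'e) monoid_scheme \<Rightarrow> ('a \<Rightarrow> 'b) \<Rightarrow> ('b \<Rightarrow> 'a \<Rightarrow> 'a)
   \<Rightarrow> ('b, 'b \<times> 'a \<times> 'b) smcat" where
  "CatXM H1 H0 d act = \<lparr>
     ob = carrier H0,
     hom = (\<lambda>x y. {(x, a, y) | a. x \<in> carrier H0 \<and> a \<in> carrier H1 \<and> y = d a \<otimes>\<^bsub>H0\<^esub> x}),
     cmp = (\<lambda>g f. (fst f, fst (snd g) \<otimes>\<^bsub>H1\<^esub> fst (snd f), snd (snd g))),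
     idm = (\<lambda>x. (x, \<one>\<^bsub>H1\<^esub>, x)),
     tob = (\<lambda>x y. x \<otimes>\<^bsub>H0\<^esub> y),
     tmor = (\<lambda>f g. (fst f \<otimes>\<^bsub>H0\<^esub> fst g,
                    fst (snd f) \<otimes>\<^bsub>H1\<^esub> act (fst f) (fst (snd g)),
                    snd (snd f) \<otimes>\<^bsub>H0\<^esub> snd (snd g))),
     unt = \<one>\<^bsub>H0\<^esub> \<rparr>"

definition Z0 ::
  "('a,'c) monoid_scheme \<Rightarrow> ('b,'e) monoid_scheme \<Rightarrow> ('a \<Rightarrow> 'b) \<Rightarrow> ('b \<Rightarrow> 'a \<Rightarrow> 'a)
   \<Rightarrow> ('b \<times> ('b \<Rightarrow> 'a)) set" where
  "Z0 G1 G0 d act = {(x, xi). x \<in> carrier G0 \<and> xi \<in> carrier G0 \<rightarrow>\<^sub>E carrier G1 \<and>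
     (\<forall>t\<in>carrier G0. d (xi t) = x \<otimes>\<^bsub>G0\<^esub> t \<otimes>\<^bsub>G0\<^esub> inv\<^bsub>G0\<^esub> x \<otimes>\<^bsub>G0\<^esub> inv\<^bsub>G0\<^esub> t) \<and>
     (\<forall>a\<in>carrier G1. xi (d a) = act x a \<otimes>\<^bsub>G1\<^esub> inv\<^bsub>G1\<^esub> a) \<and>
     (\<forall>s\<in>carrier G0. \<forall>t\<in>carrier G0. xi (s \<otimes>\<^bsub>G0\<^esub> t) = xi s \<otimes>\<^bsub>G1\<^esub> act s (xi t))}"

definition Z0grp ::
  "('a,'c) monoid_scheme \<Rightarrow> ('b,'e) monoid_scheme \<Rightarrow> ('a \<Rightarrow> 'b) \<Rightarrow> ('b \<Rightarrow> 'a \<Rightarrow> 'a)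
   \<Rightarrow> ('b \<times> ('b \<Rightarrow> 'a)) monoid" where
  "Z0grp G1 G0 d act = \<lparr> carrier = Z0 G1 G0 d act,
     mult = (\<lambda>X Y. (fst X \<otimes>\<^bsub>G0\<^esub> fst Y,
                   \<lambda>t\<in>carrier G0. act (fst X) (snd Y t) \<otimes>\<^bsub>G1\<^esub> snd X t)),
     one = (\<one>\<^bsub>G0\<^esub>, \<lambda>t\<in>carrier G0. \<one>\<^bsub>G1\<^esub>) \<rparr>"

definition deltaZ ::
  "('a,'c) monoid_scheme \<Rightarrow> ('b,'e) monoid_scheme \<Rightarrow> ('a \<Rightarrow> 'b) \<Rightarrow> ('b \<Rightarrow> 'a \<Rightarrow> 'a)
   \<Rightarrow> 'a \<Rightarrow> 'b \<times> ('b \<Rightarrow> 'a)" where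
  "deltaZ G1 G0 d act c = (d c, \<lambda>t\<in>carrier G0. c \<otimes>\<^bsub>G1\<^esub> inv\<^bsub>G1\<^esub> (act t c))"

definition actZ :: "('b \<Rightarrow> 'a \<Rightarrow> 'a) \<Rightarrow> 'b \<times> ('b \<Rightarrow> 'a) \<Rightarrow> 'a \<Rightarrow> 'a" where
  "actZ act X a = act (fst X) a"

definition xibar :: "('b,'e) monoid_scheme \<Rightarrow> 'b \<Rightarrow> ('b \<Rightarrow> 'a) \<Rightarrow> 'b \<Rightarrow> 'b \<times> 'a \<times> 'b" where
  "xibar G0 x xi = (\<lambda>y\<in>carrier G0. (y \<otimes>\<^bsub>G0\<^esub> x, xi y, x \<otimes>\<^bsub>G0\<^esub> y))"

definition ZtoC :: "('b,'e) monoid_scheme \<Rightarrow> 'b \<times> ('b \<Rightarrow> 'a) \<Rightarrow> 'b \<times> ('b \<Rightarrow> 'b \<times> 'a \<times> 'b)" where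
  "ZtoC G0 X = (fst X, xibar G0 (fst X) (snd X))"

end

theory Submission
  imports Defs
begin

text \<open>
  An element \<open>\<xi>(y) \<in> G\<^sub>1\<close> with \<open>\<partial>\<xi>(y) = [x,y]\<close> is exactly a morphism \<open>yx \<rightarrow> xy\<close> of
  \<open>Cat(G\<^sub>*)\<close>, and it is invertible since \<open>Cat(G\<^sub>*)\<close> is a groupoid. Under this dictionary (Z3) is
  the hexagon condition of the centre, and (Z2) is naturality with respect to the morphisms
  \<open>a : 1 \<rightarrow> \<partial>a\<close> out of the unit object; together with (Z3) and the Peiffer identity
  \<open>\<^sup>\<partial>\<^sup>a b = a b a\<^sup>-\<^sup>1\<close> this already gives naturality with respect to all morphisms. A morphism
  \<open>a : x \<rightarrow> y\<close> is central iff \<open>a \<xi>(t) = \<eta>(t) \<^sup>t a\<close> for all \<open>t\<close>, and by the Peiffer identity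
  again this says \<open>\<eta>(t) = \<^sup>\<partial>\<^sup>a \<xi>(t) \<cdot> a (\<^sup>t a)\<^sup>-\<^sup>1\<close>, i.e. \<open>(y,\<eta>) = \<delta>(a)(x,\<xi>)\<close>.
\<close>

locale xmod =
  fixes G1 :: "('a,'c) monoid_scheme" and G0 :: "('b,'e) monoid_scheme"
    and d :: "'a \<Rightarrow> 'b" and act :: "'b \<Rightarrow> 'a \<Rightarrow> 'a"
  assumes crossed_module: "crossed_module G1 G0 d act"
begin

sublocale g1: group G1
  using crossed_module by (simp add: crossed_module_def)

sublocale g0: group G0
  using crossed_module by (simp add: crossed_module_def)

sublocale d: group_hom G1 G0 d
  using crossed_module by (simp add: crossed_module_def group_hom_def group_hom_axioms_def)

lemma act_closed [simp]: "x \<in> carrier G0 \<Longrightarrow> a \<in> carrier G1 \<Longrightarrow> act x a \<in> carrier G1"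
  using crossed_module by (simp add: crossed_module_def)

lemma act_mult:
  "x \<in> carrier G0 \<Longrightarrow> a \<in> carrier G1 \<Longrightarrow> b \<in> carrier G1 \<Longrightarrow>
   act x (a \<otimes>\<^bsub>G1\<^esub> b) = act x a \<otimes>\<^bsub>G1\<^esub> act x b"
  using crossed_module by (simp add: crossed_module_def)

lemma act_one [simp]: "a \<in> carrier G1 \<Longrightarrow> act \<one>\<^bsub>G0\<^esub> a = a"
  using crossed_module by (simp add: crossed_module_def)

lemma act_d:
  "a \<in> carrier G1 \<Longrightarrow> b \<in> carrier G1 \<Longrightarrow> act (d b) a = b \<otimes>\<^bsub>G1\<^esub> a \<otimes>\<^bsub>G1\<^esub> inv\<^bsub>G1\<^esub> b"
  using crossed_module by (simp add: crossed_module_def)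

lemma act_one_right [simp]: "x \<in> carrier G0 \<Longrightarrow> act x \<one>\<^bsub>G1\<^esub> = \<one>\<^bsub>G1\<^esub>"
  using act_mult[of x "\<one>\<^bsub>G1\<^esub>" "\<one>\<^bsub>G1\<^esub>"] by simp

lemma g1_inv_cancel [simp]:
  "a \<in> carrier G1 \<Longrightarrow> b \<in> carrier G1 \<Longrightarrow> inv\<^bsub>G1\<^esub> a \<otimes>\<^bsub>G1\<^esub> (a \<otimes>\<^bsub>G1\<^esub> b) = b"
  "a \<in> carrier G1 \<Longrightarrow> b \<in> carrier G1 \<Longrightarrow> a \<otimes>\<^bsub>G1\<^esub> (inv\<^bsub>G1\<^esub> a \<otimes>\<^bsub>G1\<^esub> b) = b"
  by (simp_all add: g1.m_assoc[symmetric])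

abbreviation "Cat \<equiv> CatXM G1 G0 d act"
abbreviation "ZZ \<equiv> Z0 G1 G0 d act"
abbreviation "ZG \<equiv> Z0grp G1 G0 d act"
abbreviation "\<delta> \<equiv> deltaZ G1 G0 d act"
abbreviation "CatZ \<equiv> CatXM G1 ZG \<delta> (actZ act)"

lemma Cat_simps [simp]:
  "ob Cat = carrier G0"
  "cmp Cat g f = (fst f, fst (snd g) \<otimes>\<^bsub>G1\<^esub> fst (snd f), snd (snd g))"
  "idm Cat x = (x, \<one>\<^bsub>G1\<^esub>, x)"
  "tob Cat x y = x \<otimes>\<^bsub>G0\<^esub> y"
  "tmor Cat f g = (fst f \<otimes>\<^bsub>G0\<^esub> fst g, fst (snd f) \<otimes>\<^bsub>G1\<^esub> act (fst f) (fst (snd g)),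
                    snd (snd f) \<otimes>\<^bsub>G0\<^esub> snd (snd g))"
  by (simp_all add: CatXM_def)

lemma hom_Cat_iff:
  "f \<in> hom Cat x y \<longleftrightarrow>
     (\<exists>a. f = (x, a, y) \<and> x \<in> carrier G0 \<and> a \<in> carrier G1 \<and> y = d a \<otimes>\<^bsub>G0\<^esub> x)"
  by (auto simp: CatXM_def)

lemma triple_in_hom_Cat [simp]:
  "(x', a, y') \<in> hom Cat x y \<longleftrightarrow>
     x' = x \<and> y' = y \<and> x \<in> carrier G0 \<and> a \<in> carrier G1 \<and> y = d a \<otimes>\<^bsub>G0\<^esub> x"
  by (auto simp: CatXM_def)

lemma centre_simps [simp]:
  "ob (centre Cat) = {X. ctr_obj Cat X}"
  "hom (centre Cat) X Y = ctr_hom Cat X Y"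
  "cmp (centre Cat) = cmp Cat"
  "idm (centre Cat) X = idm Cat (fst X)"
  "tmor (centre Cat) = tmor Cat"
  by (simp_all add: centre_def)

lemma Z0D:
  assumes "(x, xi) \<in> ZZ"
  shows "x \<in> carrier G0"
    and "y \<in> carrier G0 \<Longrightarrow> xi y \<in> carrier G1"
    and "xi \<in> extensional (carrier G0)"
    and "t \<in> carrier G0 \<Longrightarrow> d (xi t) = x \<otimes>\<^bsub>G0\<^esub> t \<otimes>\<^bsub>G0\<^esub> inv\<^bsub>G0\<^esub> x \<otimes>\<^bsub>G0\<^esub> inv\<^bsub>G0\<^esub> t"
    and "a \<in> carrier G1 \<Longrightarrow> xi (d a) = act x a \<otimes>\<^bsub>G1\<^esub> inv\<^bsub>G1\<^esub> a"
    and "s \<in> carrier G0 \<Longrightarrow> t \<in> carrier G0 \<Longrightarrow> xi (s \<otimes>\<^bsub>G0\<^esub> t) = xi s \<otimes>\<^bsub>G1\<^esub> act s (xi t)"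
  using assms by (auto simp: Z0_def PiE_def)

lemma Z0grp_mult:
  "X \<otimes>\<^bsub>ZG\<^esub> Y = (fst X \<otimes>\<^bsub>G0\<^esub> fst Y, \<lambda>t\<in>carrier G0. act (fst X) (snd Y t) \<otimes>\<^bsub>G1\<^esub> snd X t)"
  by (simp add: Z0grp_def)

lemma deltaZ_mult:
  assumes "(x, xi) \<in> ZZ" and a: "a \<in> carrier G1"
  shows "\<delta> a \<otimes>\<^bsub>ZG\<^esub> (x, xi) =
           (d a \<otimes>\<^bsub>G0\<^esub> x, \<lambda>t\<in>carrier G0. a \<otimes>\<^bsub>G1\<^esub> xi t \<otimes>\<^bsub>G1\<^esub> inv\<^bsub>G1\<^esub> act t a)"
proof -
  have "act (d a) (xi t) \<otimes>\<^bsub>G1\<^esub> (a \<otimes>\<^bsub>G1\<^esub> inv\<^bsub>G1\<^esub> act t a) =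
          a \<otimes>\<^bsub>G1\<^esub> xi t \<otimes>\<^bsub>G1\<^esub> inv\<^bsub>G1\<^esub> act t a" if "t \<in> carrier G0" for t
    using that a Z0D(2)[OF assms(1) that] by (simp add: act_d g1.m_assoc)
  then show ?thesis
    by (simp add: Z0grp_mult deltaZ_def cong: restrict_cong)
qed

lemma xibar_apply [simp]:
  "y \<in> carrier G0 \<Longrightarrow> xibar G0 x xi y = (y \<otimes>\<^bsub>G0\<^esub> x, xi y, x \<otimes>\<^bsub>G0\<^esub> y)"
  by (simp add: xibar_def)

lemma commutator_morphism_iff:
  assumes "x \<in> carrier G0" "y \<in> carrier G0" "c \<in> carrier G1"
  shows "(y \<otimes>\<^bsub>G0\<^esub> x, c, x \<otimes>\<^bsub>G0\<^esub> y) \<in> hom Cat (y \<otimes>\<^bsub>G0\<^esub> x) (x \<otimes>\<^bsub>G0\<^esub> y) \<longleftrightarrow>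
           d c = x \<otimes>\<^bsub>G0\<^esub> y \<otimes>\<^bsub>G0\<^esub> inv\<^bsub>G0\<^esub> x \<otimes>\<^bsub>G0\<^esub> inv\<^bsub>G0\<^esub> y"
proof -
  have "x \<otimes>\<^bsub>G0\<^esub> y = d c \<otimes>\<^bsub>G0\<^esub> (y \<otimes>\<^bsub>G0\<^esub> x) \<longleftrightarrow>
          d c = (x \<otimes>\<^bsub>G0\<^esub> y) \<otimes>\<^bsub>G0\<^esub> inv\<^bsub>G0\<^esub> (y \<otimes>\<^bsub>G0\<^esub> x)"
    using assms g0.inv_solve_right[of "d c" "x \<otimes>\<^bsub>G0\<^esub> y" "y \<otimes>\<^bsub>G0\<^esub> x"] by auto
  then show ?thesis
    using assms by (auto simp: g0.inv_mult_group g0.m_assoc)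
qed

lemma xibar_in_hom:
  assumes "(x, xi) \<in> ZZ" "y \<in> carrier G0"
  shows "(y \<otimes>\<^bsub>G0\<^esub> x, xi y, x \<otimes>\<^bsub>G0\<^esub> y) \<in> hom Cat (y \<otimes>\<^bsub>G0\<^esub> x) (x \<otimes>\<^bsub>G0\<^esub> y)"
  using commutator_morphism_iff[OF Z0D(1)[OF assms(1)] assms(2) Z0D(2)[OF assms]] Z0D(4)[OF assms]
  by blast

lemma Cat_morphism_is_iso:
  assumes "f \<in> hom Cat x y"
  shows "is_iso Cat f x y"
proof -
  obtain a where f: "f = (x, a, y)" and a: "a \<in> carrier G1" and x: "x \<in> carrier G0"
    and y: "y = d a \<otimes>\<^bsub>G0\<^esub> x"
    using assms by (auto simp: hom_Cat_iff)
  have "(y, inv\<^bsub>G1\<^esub> a, x) \<in> hom Cat y x"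
    using a x by (simp add: y g0.m_assoc[symmetric])
  then show ?thesis
    using assms a unfolding is_iso_def by (auto simp: f intro!: bexI[of _ "(y, inv\<^bsub>G1\<^esub> a, x)"])
qed

lemma Z0_naturality:
  assumes "(x, xi) \<in> ZZ" "y \<in> carrier G0" "a \<in> carrier G1"
  shows "act x a \<otimes>\<^bsub>G1\<^esub> xi y = xi (d a \<otimes>\<^bsub>G0\<^esub> y) \<otimes>\<^bsub>G1\<^esub> a"
  using assms Z0D[OF assms(1)] by (simp add: act_d g1.m_assoc)

lemma xibar_nat_iso:
  assumes "(x, xi) \<in> ZZ"
  shows "nat_iso_lr Cat x (xibar G0 x xi)"
  unfolding nat_iso_lr_def
proof (intro conjI ballI)
  fix y assume "y \<in> ob Cat"
  then show "is_iso Cat (xibar G0 x xi y) (tob Cat y x) (tob Cat x y)"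
    using Cat_morphism_is_iso[OF xibar_in_hom[OF assms]] by simp
next
  fix y y' f assume "y \<in> ob Cat" "y' \<in> ob Cat" "f \<in> hom Cat y y'"
  then obtain a where "f = (y, a, y')" "a \<in> carrier G1" "y' = d a \<otimes>\<^bsub>G0\<^esub> y" "y \<in> carrier G0"
    by (auto simp: hom_Cat_iff)
  with assms show "cmp Cat (tmor Cat (idm Cat x) f) (xibar G0 x xi y) =
                   cmp Cat (xibar G0 x xi y') (tmor Cat f (idm Cat x))"
    by (simp add: Z0_naturality Z0D(1,2))
qed

lemma xibar_ctr_obj:
  assumes "(x, xi) \<in> ZZ"
  shows "ctr_obj Cat (x, xibar G0 x xi)"
proof -
  have "xibar G0 x xi (tob Cat y z) =
          cmp Cat (tmor Cat (xibar G0 x xi y) (idm Cat z)) (tmor Cat (idm Cat y) (xibar G0 x xi z))"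
    if "y \<in> ob Cat" "z \<in> ob Cat" for y z
    using that Z0D[OF assms] by (simp add: g0.m_assoc)
  then show ?thesis
    using xibar_nat_iso[OF assms] Z0D(1)[OF assms] by (simp add: ctr_obj_def xibar_def)
qed

lemma ctr_obj_in_ZtoC_image:
  assumes "ctr_obj Cat (x, ze)"
  shows "(x, ze) \<in> ZtoC G0 ` ZZ"
proof -
  from assms have x: "x \<in> carrier G0" and ext: "ze \<in> extensional (carrier G0)"
    and iso: "\<And>y. y \<in> carrier G0 \<Longrightarrow> ze y \<in> hom Cat (y \<otimes>\<^bsub>G0\<^esub> x) (x \<otimes>\<^bsub>G0\<^esub> y)"
    and nat: "\<And>y y' f. y \<in> carrier G0 \<Longrightarrow> y' \<in> carrier G0 \<Longrightarrow> f \<in> hom Cat y y' \<Longrightarrow>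
        cmp Cat (tmor Cat (idm Cat x) f) (ze y) = cmp Cat (ze y') (tmor Cat f (idm Cat x))"
    and hex: "\<And>y z. y \<in> carrier G0 \<Longrightarrow> z \<in> carrier G0 \<Longrightarrow>
        ze (y \<otimes>\<^bsub>G0\<^esub> z) = cmp Cat (tmor Cat (ze y) (idm Cat z)) (tmor Cat (idm Cat y) (ze z))"
    by (auto simp: ctr_obj_def nat_iso_lr_def is_iso_def)
  define xi where "xi = (\<lambda>y\<in>carrier G0. fst (snd (ze y)))"
  have ze: "ze y = (y \<otimes>\<^bsub>G0\<^esub> x, xi y, x \<otimes>\<^bsub>G0\<^esub> y)" and xi: "xi y \<in> carrier G1"
    if "y \<in> carrier G0" for y
    using iso[OF that] that by (auto simp: hom_Cat_iff xi_def)
  have Z1: "d (xi t) = x \<otimes>\<^bsub>G0\<^esub> t \<otimes>\<^bsub>G0\<^esub> inv\<^bsub>G0\<^esub> x \<otimes>\<^bsub>G0\<^esub> inv\<^bsub>G0\<^esub> t" if "t \<in> carrier G0" for t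
    using iso[OF that] commutator_morphism_iff[OF x that xi[OF that]] unfolding ze[OF that] by blast
  have Z3: "xi (s \<otimes>\<^bsub>G0\<^esub> t) = xi s \<otimes>\<^bsub>G1\<^esub> act s (xi t)"
    if "s \<in> carrier G0" "t \<in> carrier G0" for s t
    using arg_cong[OF hex[OF that], of "\<lambda>f. fst (snd f)"] that x xi[OF that(1)] xi[OF that(2)]
    by (simp add: ze)
  have xi_one: "xi \<one>\<^bsub>G0\<^esub> = \<one>\<^bsub>G1\<^esub>"
    using Z3[of "\<one>\<^bsub>G0\<^esub>" "\<one>\<^bsub>G0\<^esub>"] xi[of "\<one>\<^bsub>G0\<^esub>"] by simp
  have Z2: "xi (d a) = act x a \<otimes>\<^bsub>G1\<^esub> inv\<^bsub>G1\<^esub> a" if a: "a \<in> carrier G1" for a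
  proof -
    have "act x a = xi (d a) \<otimes>\<^bsub>G1\<^esub> a"
      using nat[of "\<one>\<^bsub>G0\<^esub>" "d a" "(\<one>\<^bsub>G0\<^esub>, a, d a)"] a x xi_one by (simp add: ze)
    then show ?thesis
      using g1.inv_solve_right[of "xi (d a)" "act x a" a] a x xi[of "d a"] by simp
  qed
  have "(x, xi) \<in> ZZ"
    using x xi Z1 Z2 Z3 by (auto simp: Z0_def xi_def)
  moreover have "xibar G0 x xi = ze"
    using ext ze by (auto simp: xibar_def extensional_def fun_eq_iff)
  ultimately show ?thesis
    unfolding ZtoC_def by (force intro: image_eqI[of _ _ "(x, xi)"])
qed

lemma ZtoC_bij: "bij_betw (ZtoC G0) ZZ (ob (centre Cat))"
proof (rule bij_betw_imageI)
  show "inj_on (ZtoC G0) ZZ"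
  proof (rule inj_onI, clarify)
    fix x xi y eta assume X: "(x, xi) \<in> ZZ" and Y: "(y, eta) \<in> ZZ"
      and eq: "ZtoC G0 (x, xi) = ZtoC G0 (y, eta)"
    then have "x = y" and xibar_eq: "xibar G0 x xi = xibar G0 y eta"
      by (auto simp: ZtoC_def)
    have "xi t = eta t" if "t \<in> carrier G0" for t
      using that fun_cong[OF xibar_eq, of t] by simp
    then show "x = y \<and> xi = eta"
      using \<open>x = y\<close> Z0D(3)[OF X] Z0D(3)[OF Y] by (auto intro: extensionalityI)
  qed
  show "ZtoC G0 ` ZZ = ob (centre Cat)"
    using xibar_ctr_obj ctr_obj_in_ZtoC_image by (fastforce simp: ZtoC_def)
qed

lemma central_morphism_iff_deltaZ:
  assumes X: "(x, xi) \<in> ZZ" and Y: "(y, eta) \<in> ZZ" and a: "a \<in> carrier G1"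
    and y: "y = d a \<otimes>\<^bsub>G0\<^esub> x"
  shows "(x, a, y) \<in> hom (centre Cat) (x, xibar G0 x xi) (y, xibar G0 y eta)
     \<longleftrightarrow> (y, eta) = \<delta> a \<otimes>\<^bsub>ZG\<^esub> (x, xi)"
proof -
  have "(x, a, y) \<in> hom (centre Cat) (x, xibar G0 x xi) (y, xibar G0 y eta) \<longleftrightarrow>
          (\<forall>t\<in>carrier G0. a \<otimes>\<^bsub>G1\<^esub> xi t = eta t \<otimes>\<^bsub>G1\<^esub> act t a)"
    using a Z0D(1,2)[OF X] Z0D(2)[OF Y] by (simp add: ctr_hom_def y g0.m_assoc)
  also have "\<dots> \<longleftrightarrow> (\<forall>t\<in>carrier G0. eta t = a \<otimes>\<^bsub>G1\<^esub> xi t \<otimes>\<^bsub>G1\<^esub> inv\<^bsub>G1\<^esub> act t a)"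
    using a Z0D(2)[OF X] Z0D(2)[OF Y] g1.inv_solve_right by auto
  also have "\<dots> \<longleftrightarrow> (y, eta) = \<delta> a \<otimes>\<^bsub>ZG\<^esub> (x, xi)"
    using Z0D(3)[OF Y] by (auto simp: deltaZ_mult[OF X a] y extensional_def fun_eq_iff)
  finally show ?thesis .
qed

lemma CatZ_simps [simp]:
  "ob CatZ = ZZ"
  "cmp CatZ g f = (fst f, fst (snd g) \<otimes>\<^bsub>G1\<^esub> fst (snd f), snd (snd g))"
  "idm CatZ X = (X, \<one>\<^bsub>G1\<^esub>, X)"
  "tob CatZ X Y = X \<otimes>\<^bsub>ZG\<^esub> Y"
  "tmor CatZ f g = (fst f \<otimes>\<^bsub>ZG\<^esub> fst g, fst (snd f) \<otimes>\<^bsub>G1\<^esub> act (fst (fst f)) (fst (snd g)),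
                    snd (snd f) \<otimes>\<^bsub>ZG\<^esub> snd (snd g))"
  "unt CatZ = \<one>\<^bsub>ZG\<^esub>"
  by (simp_all add: CatXM_def Z0grp_def actZ_def)

lemma hom_CatZ_iff:
  "f \<in> hom CatZ X Y \<longleftrightarrow> (\<exists>a. f = (X, a, Y) \<and> X \<in> ZZ \<and> a \<in> carrier G1 \<and> Y = \<delta> a \<otimes>\<^bsub>ZG\<^esub> X)"
  by (auto simp: CatXM_def Z0grp_def)

abbreviation forget_ends :: "('b \<times> ('b \<Rightarrow> 'a)) \<times> 'a \<times> 'b \<times> ('b \<Rightarrow> 'a) \<Rightarrow> 'b \<times> 'a \<times> 'b" where
  "forget_ends \<equiv> \<lambda>(X, a, Y). (fst X, a, fst Y)"

lemma hom_centre_ZtoC: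
  assumes X: "(x, xi) \<in> ZZ" and Y: "(y, eta) \<in> ZZ"
  shows "hom (centre Cat) (ZtoC G0 (x, xi)) (ZtoC G0 (y, eta)) =
           forget_ends ` hom CatZ (x, xi) (y, eta)"
proof (intro equalityI subsetI)
  fix f assume f: "f \<in> hom (centre Cat) (ZtoC G0 (x, xi)) (ZtoC G0 (y, eta))"
  then obtain a where fa: "f = (x, a, y)" and a: "a \<in> carrier G1" and y: "y = d a \<otimes>\<^bsub>G0\<^esub> x"
    by (auto simp: ctr_hom_def ZtoC_def hom_Cat_iff)
  have "(y, eta) = \<delta> a \<otimes>\<^bsub>ZG\<^esub> (x, xi)"
    using f central_morphism_iff_deltaZ[OF X Y a y] by (simp add: fa ZtoC_def)
  then have "((x, xi), a, (y, eta)) \<in> hom CatZ (x, xi) (y, eta)"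
    using X a by (simp add: hom_CatZ_iff)
  then show "f \<in> forget_ends ` hom CatZ (x, xi) (y, eta)"
    by (force simp: fa)
next
  fix f assume "f \<in> forget_ends ` hom CatZ (x, xi) (y, eta)"
  then obtain a where fa: "f = (x, a, y)" and a: "a \<in> carrier G1"
    and Yd: "(y, eta) = \<delta> a \<otimes>\<^bsub>ZG\<^esub> (x, xi)"
    by (auto simp: hom_CatZ_iff)
  have "y = d a \<otimes>\<^bsub>G0\<^esub> x"
    using arg_cong[OF Yd, of fst] X a by (simp add: deltaZ_mult)
  then have "(x, a, y) \<in> hom (centre Cat) (x, xibar G0 x xi) (y, xibar G0 y eta)"
    using central_morphism_iff_deltaZ[OF X Y a] Yd by blast
  then show "f \<in> hom (centre Cat) (ZtoC G0 (x, xi)) (ZtoC G0 (y, eta))"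
    by (simp add: fa ZtoC_def)
qed

lemma forget_ends_bij:
  assumes "X \<in> ZZ" "Y \<in> ZZ"
  shows "bij_betw forget_ends (hom CatZ X Y) (hom (centre Cat) (ZtoC G0 X) (ZtoC G0 Y))"
proof (rule bij_betw_imageI)
  show "inj_on forget_ends (hom CatZ X Y)"
  proof (rule inj_onI)
    fix f g assume "f \<in> hom CatZ X Y" "g \<in> hom CatZ X Y" "forget_ends f = forget_ends g"
    moreover obtain a b where "f = (X, a, Y)" "g = (X, b, Y)"
      using calculation(1,2) hom_CatZ_iff by meson
    ultimately show "f = g" by simp
  qed
  show "forget_ends ` hom CatZ X Y = hom (centre Cat) (ZtoC G0 X) (ZtoC G0 Y)"
    using assms hom_centre_ZtoC by (cases X, cases Y) simp
qed

lemma ZtoC_mult: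
  assumes X: "(x, xi) \<in> ZZ" and Y: "(y, eta) \<in> ZZ"
  shows "ZtoC G0 ((x, xi) \<otimes>\<^bsub>ZG\<^esub> (y, eta)) = tob (centre Cat) (ZtoC G0 (x, xi)) (ZtoC G0 (y, eta))"
proof -
  have "xibar G0 (x \<otimes>\<^bsub>G0\<^esub> y) (\<lambda>t\<in>carrier G0. act x (eta t) \<otimes>\<^bsub>G1\<^esub> xi t) =
     (\<lambda>z\<in>carrier G0. cmp Cat (tmor Cat (idm Cat x) (xibar G0 y eta z))
                              (tmor Cat (xibar G0 x xi z) (idm Cat y)))"
    using Z0D(1,2)[OF X] Z0D(1,2)[OF Y] by (auto simp: xibar_def g0.m_assoc)
  then show ?thesis
    by (simp add: ZtoC_def centre_def Z0grp_mult)
qed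

lemma ZtoC_one: "ZtoC G0 \<one>\<^bsub>ZG\<^esub> = unt (centre Cat)"
proof -
  have "xibar G0 \<one>\<^bsub>G0\<^esub> (\<lambda>t\<in>carrier G0. \<one>\<^bsub>G1\<^esub>) = (\<lambda>z\<in>carrier G0. idm Cat z)"
    by (auto simp: xibar_def)
  then show ?thesis
    by (simp add: ZtoC_def centre_def Z0grp_def CatXM_def)
qed

lemma ZtoC_smcat_iso: "smcat_iso CatZ (centre Cat) (ZtoC G0) forget_ends"
  unfolding smcat_iso_def
proof (intro conjI ballI)
  show "bij_betw (ZtoC G0) (ob CatZ) (ob (centre Cat))"
    using ZtoC_bij by simp
  show "bij_betw forget_ends (hom CatZ X Y) (hom (centre Cat) (ZtoC G0 X) (ZtoC G0 Y))"
    if "X \<in> ob CatZ" "Y \<in> ob CatZ" for X Y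
    using that forget_ends_bij by simp
  show "ZtoC G0 (tob CatZ X Y) = tob (centre Cat) (ZtoC G0 X) (ZtoC G0 Y)"
    if "X \<in> ob CatZ" "Y \<in> ob CatZ" for X Y
    using that ZtoC_mult by (cases X, cases Y) simp
  show "ZtoC G0 (unt CatZ) = unt (centre Cat)"
    using ZtoC_one by simp
next
  fix X Y Z f g assume "f \<in> hom CatZ X Y" "g \<in> hom CatZ Y Z"
  then show "forget_ends (cmp CatZ g f) = cmp (centre Cat) (forget_ends g) (forget_ends f)"
    by (auto simp: hom_CatZ_iff)
next
  fix X X' Y Y' f g assume "f \<in> hom CatZ X X'" "g \<in> hom CatZ Y Y'"
  then show "forget_ends (tmor CatZ f g) = tmor (centre Cat) (forget_ends f) (forget_ends g)"
    by (auto simp: hom_CatZ_iff Z0grp_mult)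
qed (simp add: ZtoC_def)

end

theorem lemma3p7:
  fixes G1 :: "('a,'c) monoid_scheme" and G0 :: "('b,'e) monoid_scheme"
    and d :: "'a \<Rightarrow> 'b" and act :: "'b \<Rightarrow> 'a \<Rightarrow> 'a"
  assumes "crossed_module G1 G0 d act"
  shows
    "(\<forall>(x, xi)\<in>Z0 G1 G0 d act. \<forall>y\<in>carrier G0.
        (y \<otimes>\<^bsub>G0\<^esub> x, xi y, x \<otimes>\<^bsub>G0\<^esub> y)
          \<in> hom (CatXM G1 G0 d act) (y \<otimes>\<^bsub>G0\<^esub> x) (x \<otimes>\<^bsub>G0\<^esub> y))
   \<and> (\<forall>(x, xi)\<in>Z0 G1 G0 d act. nat_iso_lr (CatXM G1 G0 d act) x (xibar G0 x xi))
   \<and> (\<forall>(x, xi)\<in>Z0 G1 G0 d act. ctr_obj (CatXM G1 G0 d act) (x, xibar G0 x xi))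
   \<and> bij_betw (ZtoC G0) (Z0 G1 G0 d act) (ob (centre (CatXM G1 G0 d act)))
   \<and> (\<forall>(x, xi)\<in>Z0 G1 G0 d act. \<forall>(y, eta)\<in>Z0 G1 G0 d act. \<forall>a\<in>carrier G1.
        y = d a \<otimes>\<^bsub>G0\<^esub> x \<longrightarrow>
        ((x, a, y) \<in> hom (centre (CatXM G1 G0 d act)) (x, xibar G0 x xi) (y, xibar G0 y eta)
          \<longleftrightarrow> (y, eta) = deltaZ G1 G0 d act a \<otimes>\<^bsub>Z0grp G1 G0 d act\<^esub> (x, xi)))
   \<and> smcat_iso (CatXM G1 (Z0grp G1 G0 d act) (deltaZ G1 G0 d act) (actZ act))
               (centre (CatXM G1 G0 d act))
               (ZtoC G0) (\<lambda>(X, a, Y). (fst X, a, fst Y))"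
proof -
  interpret xmod G1 G0 d act
    using assms by (rule xmod.intro)
  show ?thesis
    by (intro conjI ZtoC_bij ZtoC_smcat_iso)
      (use xibar_in_hom in blast, use xibar_nat_iso in blast, use xibar_ctr_obj in blast,
        use central_morphism_iff_deltaZ in blast)
qed

end
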